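(* Let $A(x)$ be an $n\times n$ matrix function, holomorphic and single-valued in a punctured disc $0<|x-x_0|<\rho_0$, with Laurent expansion $A(x)=\frac{a_{-1}}{x-x_0}+\sum_{k\ge 0}a_k(x-x_0)^k$. Let $W(x)$ be an invertible (for $x\ne x_0$) solution of $\frac{dW}{dx}=A(x)W$ of the form $W(x)=\sum_{k\ge m}b_k(x-x_0)^k$ with $b_m\neq0$, and suppose $W^{-1}(x)=\sum_{k\ge p}c_k(x-x_0)^k$ with $c_p\neq 0$ (both series convergent in the punctured disc, $m,p\in\mathbb Z$). Then $m$ and $-p$ are eigenvalues of $a_{-1}$, and the matrix $a_{-1}$ is either a scalar matrix or has at least two different integer eigenvalues. *)

theory Defs
  imports "HOL-Analysis.Analysis"
begin

definition cscale :: "complex \<Rightarrow> complex ^ 'n ^ 'm \<Rightarrow> complex ^ 'n ^ 'm" where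
  "cscale c M = (\<chi> i j. c * M $ i $ j)"

definition is_eigenvalue :: "complex ^ 'n ^ 'n \<Rightarrow> complex \<Rightarrow> bool" where
  "is_eigenvalue M l \<longleftrightarrow> (\<exists>v. v \<noteq> 0 \<and> M *v v = l *s v)"

definition is_scalar_matrix :: "complex ^ 'n ^ 'n \<Rightarrow> bool" where
  "is_scalar_matrix M \<longleftrightarrow> (\<exists>c. M = mat c)"

end

theory Submission
  imports Defs
begin

(* Near x0 write A = a_-1 / (x - x0) + H, W = (x - x0)^m B and W^-1 = (x - x0)^p C with
   H, B, C holomorphic at x0, B(x0) = b_0 and C(x0) = c_0.  Multiplying W' = A W by
   (x - x0)^(1-m) gives m B + (x - x0) B' = (a_-1 + (x - x0) H) B, and letting x -> x0
   yields a_-1 b_0 = m b_0: every nonzero column of b_0 is an eigenvector for m.  The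
   inverse satisfies the adjoint equation (W^-1)' = - W^-1 A, which in the same way gives
   c_0 a_-1 = -p c_0, so -p is an eigenvalue of the transpose of a_-1, hence of a_-1.
   If m = -p, then B C = I, so b_0 c_0 = I and a_-1 = a_-1 b_0 c_0 = m I; otherwise m and
   -p are two different integer eigenvalues. *)

lemma eventually_punctured_ball_at_0:
  fixes r :: real
  assumes "r > 0"
  shows "eventually (\<lambda>z. z \<in> ball 0 r - {0}) (at (0 :: 'a::real_normed_vector))"
  using assms by (auto simp: eventually_at dist_commute intro!: exI[of _ r])

lemma summable_powser_punctured_disc:
  fixes c :: "nat \<Rightarrow> 'a::{real_normed_field,banach}"
  assumes "\<And>z. z \<noteq> 0 \<Longrightarrow> norm z < r \<Longrightarrow> summable (\<lambda>n. c n * z ^ n)" and "norm z < r"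
  shows "summable (\<lambda>n. c n * z ^ n)"
proof (cases "z = 0")
  case True
  then show ?thesis
    using powser_sums_zero sums_summable by blast
qed (use assms in auto)

lemma powser_has_field_derivative_punctured_disc:
  fixes c :: "nat \<Rightarrow> 'a::{real_normed_field,banach}"
  assumes "\<And>z. z \<noteq> 0 \<Longrightarrow> norm z < r \<Longrightarrow> summable (\<lambda>n. c n * z ^ n)" and "norm z < r"
  shows "((\<lambda>z. \<Sum>n. c n * z ^ n) has_field_derivative (\<Sum>n. diffs c n * z ^ n)) (at z)"
proof -
  have "summable (\<lambda>n. c n * w ^ n)" if "norm w < r" for w
    using assms(1) that by (rule summable_powser_punctured_disc)
  then show ?thesis
    using assms(2) by (rule termdiffs_strong')
qed

lemma powser_punctured_disc_tendsto:
  fixes c :: "nat \<Rightarrow> 'a::{real_normed_field,banach}"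
  assumes "r > 0" and summable: "\<And>z. z \<noteq> 0 \<Longrightarrow> norm z < r \<Longrightarrow> summable (\<lambda>n. c n * z ^ n)"
  shows "((\<lambda>z. \<Sum>n. c n * z ^ n) \<longlongrightarrow> c 0) (at 0)"
    and "((\<lambda>z. z * (\<Sum>n. diffs c n * z ^ n)) \<longlongrightarrow> 0) (at 0)"
proof -
  note summable_disc = summable_powser_punctured_disc[OF summable]
  show "((\<lambda>z. \<Sum>n. c n * z ^ n) \<longlongrightarrow> c 0) (at 0)"
    using \<open>r > 0\<close> by (intro powser_limit_0_strong[of r]) (auto intro: summable_disc)
  have "((\<lambda>z. \<Sum>n. diffs c n * z ^ n) \<longlongrightarrow> diffs c 0) (at 0)"
    using \<open>r > 0\<close> by (intro powser_limit_0_strong[of r]) (auto intro: termdiff_converges summable_disc)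
  then show "((\<lambda>z. z * (\<Sum>n. diffs c n * z ^ n)) \<longlongrightarrow> 0) (at 0)"
    by (auto intro!: tendsto_eq_intros)
qed

lemma laurent_series_powser_sums:
  fixes f :: "nat \<Rightarrow> 'a::{real_normed_field,banach}" and q :: int
  assumes "z \<noteq> 0" and "(\<lambda>k. z powi (q + int k) * f k) sums w"
  shows "(\<lambda>k. f k * z ^ k) sums (z powi (- q) * w)"
proof -
  have "z powi (- q) * z powi (q + int k) = z ^ k" for k
    using \<open>z \<noteq> 0\<close> by (simp add: power_int_add[symmetric])
  then have "z powi (- q) * (z powi (q + int k) * f k) = f k * z ^ k" for k
    by (metis mult.assoc mult.commute)
  then show ?thesis
    using sums_mult[OF assms(2), of "z powi (- q)"] by (simp only:)
qed

lemma laurent_series_has_field_derivative: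
  fixes f :: "nat \<Rightarrow> 'a::{real_normed_field,banach}" and q :: int
  assumes sums: "\<And>z. z \<in> ball 0 r - {0} \<Longrightarrow> (\<lambda>k. z powi (q + int k) * f k) sums g z"
    and z: "z \<in> ball 0 r - {0}"
  shows "(g has_field_derivative
           z powi (q - 1) * (of_int q * (\<Sum>k. f k * z ^ k) + z * (\<Sum>k. diffs f k * z ^ k))) (at z)"
proof -
  define P where "P w = (\<Sum>k. f k * w ^ k)" for w
  define P' where "P' w = (\<Sum>k. diffs f k * w ^ k)" for w
  have P_sums: "(\<lambda>k. f k * w ^ k) sums (w powi (- q) * g w)" if "w \<in> ball 0 r - {0}" for w
    using that by (intro laurent_series_powser_sums sums) auto
  have g_eq: "g w = w powi q * P w" if "w \<in> ball 0 r - {0}" for w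
  proof -
    have "P w = w powi (- q) * g w"
      using P_sums[OF that] by (simp add: P_def sums_iff)
    then show ?thesis
      using that by (simp add: power_int_minus)
  qed
  have "summable (\<lambda>k. f k * w ^ k)" if "w \<noteq> 0" "norm w < r" for w
    using P_sums[of w] sums_summable that by auto
  then have "(P has_field_derivative P' z) (at z)"
    unfolding P_def P'_def using z by (intro powser_has_field_derivative_punctured_disc) auto
  then have "((\<lambda>w. w powi q * P w) has_field_derivative
           of_int q * z powi (q - 1) * 1 * P z + P' z * z powi q) (at z)"
    using z by (intro DERIV_mult DERIV_power_int DERIV_ident) auto
  moreover have "z powi q = z powi (q - 1) * z"
    using z power_int_add_1[of z "q - 1"] by simp
  ultimately have "((\<lambda>w. w powi q * P w) has_field_derivative
           z powi (q - 1) * (of_int q * P z + z * P' z)) (at z)"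
    by (simp add: algebra_simps)
  then have "(g has_field_derivative z powi (q - 1) * (of_int q * P z + z * P' z)) (at z)"
    by (rule has_field_derivative_transform_within_open[where S = "ball 0 r - {0}"])
      (use z g_eq in auto)
  then show ?thesis
    by (simp only: P_def P'_def)
qed

lemma laurent_series_leading_terms:
  fixes f :: "nat \<Rightarrow> 'a::{real_normed_field,banach}" and q :: int
  assumes "r > 0"
    and sums: "\<And>z. z \<in> ball 0 r - {0} \<Longrightarrow> (\<lambda>k. z powi (q + int k) * f k) sums g z"
  shows laurent_series_tendsto_leading: "((\<lambda>z. z powi (- q) * g z) \<longlongrightarrow> f 0) (at 0)"
    and laurent_series_differentiable: "\<And>z. z \<in> ball 0 r - {0} \<Longrightarrow> g field_differentiable (at z)"
    and laurent_series_deriv_tendsto_leading: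
      "((\<lambda>z. z powi (1 - q) * deriv g z) \<longlongrightarrow> of_int q * f 0) (at 0)"
proof -
  define P where "P z = (\<Sum>k. f k * z ^ k)" for z
  define P' where "P' z = (\<Sum>k. diffs f k * z ^ k)" for z
  have P_sums: "(\<lambda>k. f k * z ^ k) sums (z powi (- q) * g z)" if "z \<in> ball 0 r - {0}" for z
    using that by (intro laurent_series_powser_sums sums) auto
  have "summable (\<lambda>k. f k * z ^ k)" if "z \<noteq> 0" "norm z < r" for z
    using P_sums[of z] sums_summable that by auto
  note P = powser_punctured_disc_tendsto[OF \<open>r > 0\<close> this, folded P_def P'_def]
  have g_deriv: "(g has_field_derivative z powi (q - 1) * (of_int q * P z + z * P' z)) (at z)"
    if "z \<in> ball 0 r - {0}" for z
    unfolding P_def P'_def using sums that by (rule laurent_series_has_field_derivative)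
  note ev = eventually_punctured_ball_at_0[OF \<open>r > 0\<close>]
  show "((\<lambda>z. z powi (- q) * g z) \<longlongrightarrow> f 0) (at 0)"
  proof (rule Lim_transform_eventually[OF P(1)])
    show "\<forall>\<^sub>F z in at 0. P z = z powi (- q) * g z"
      using ev by eventually_elim (use P_sums in \<open>simp add: P_def sums_iff\<close>)
  qed
  show "\<And>z. z \<in> ball 0 r - {0} \<Longrightarrow> g field_differentiable (at z)"
    using g_deriv field_differentiable_def by blast
  have "((\<lambda>z. of_int q * P z + z * P' z) \<longlongrightarrow> of_int q * f 0) (at 0)"
    using tendsto_add[OF tendsto_mult_left[OF P(1)] P(2)] by simp
  then show "((\<lambda>z. z powi (1 - q) * deriv g z) \<longlongrightarrow> of_int q * f 0) (at 0)"
  proof (rule Lim_transform_eventually)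
    show "\<forall>\<^sub>F z in at 0. of_int q * P z + z * P' z = z powi (1 - q) * deriv g z"
      using ev
    proof eventually_elim
      case (elim z)
      then have "z powi (1 - q) * z powi (q - 1) = 1"
        by (simp add: power_int_add[symmetric])
      then show ?case
        using DERIV_imp_deriv[OF g_deriv[OF elim]] by (simp add: mult.assoc[symmetric])
    qed
  qed
qed

lemma cscale_nth [simp]: "cscale c M $ i $ j = c * M $ i $ j"
  by (simp add: cscale_def)

lemma cscale_one [simp]: "cscale 1 M = M"
  by (simp add: vec_eq_iff)

lemma cscale_zero [simp]: "cscale 0 M = 0"
  by (simp add: vec_eq_iff)

lemma cscale_minus_right [simp]: "cscale a (- M) = - cscale a M"
  by (simp add: vec_eq_iff)

lemma cscale_minus_left: "cscale (- a) M = - cscale a M"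
  by (simp add: vec_eq_iff)

lemma transpose_cscale: "transpose (cscale a M) = cscale a (transpose M)"
  by (simp add: vec_eq_iff transpose_def)

lemma cscale_mat [simp]: "cscale a (mat b) = mat (a * b)"
  by (simp add: vec_eq_iff mat_def)

lemma matrix_add_rdistrib: "(M + N) ** P = M ** P + N ** P"
  by (simp add: vec_eq_iff matrix_matrix_mult_def sum.distrib distrib_right)

lemma matrix_mult_cscale_left [simp]: "cscale a M ** N = cscale a (M ** N)"
  by (simp add: vec_eq_iff matrix_matrix_mult_def sum_distrib_left mult.assoc)

lemma matrix_mult_cscale_right [simp]: "M ** cscale a N = cscale a (M ** N)"
  by (simp add: vec_eq_iff matrix_matrix_mult_def sum_distrib_left algebra_simps)

lemma tendsto_cscale [tendsto_intros]:
  "(f \<longlongrightarrow> a) L \<Longrightarrow> (X \<longlongrightarrow> M) L \<Longrightarrow> ((\<lambda>x. cscale (f x) (X x)) \<longlongrightarrow> cscale a M) L"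
  by (intro vec_tendstoI) (auto intro!: tendsto_mult tendsto_vec_nth)

lemma tendsto_matrix_mult [tendsto_intros]:
  fixes X :: "'a \<Rightarrow> 'b::real_normed_field ^ 'n ^ 'm"
  assumes "(X \<longlongrightarrow> M) L" "(Y \<longlongrightarrow> N) L"
  shows "((\<lambda>x. X x ** Y x) \<longlongrightarrow> M ** N) L"
proof (intro vec_tendstoI)
  fix i j
  show "((\<lambda>x. (X x ** Y x) $ i $ j) \<longlongrightarrow> (M ** N) $ i $ j) L"
    unfolding matrix_matrix_mult_def vec_lambda_beta
    by (intro tendsto_sum tendsto_mult tendsto_vec_nth assms)
qed

lemma cscale_powi_simple_pole:
  assumes "z \<noteq> 0"
  shows "cscale (z powi (1 - q)) (cscale (1 / z) M + N) = cscale (z powi (- q)) (M + cscale z N)"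
proof -
  have "z powi (1 - q) = z * z powi (- q)"
    using power_int_add[of z 1 "- q"] assms by simp
  then show ?thesis
    using assms by (simp add: vec_eq_iff field_simps)
qed

lemma matrix_inv_left: "invertible M \<Longrightarrow> matrix_inv M ** M = mat 1"
  unfolding invertible_def matrix_inv_def by (rule someI2_ex) auto

lemma is_eigenvalue_iff_det:
  fixes M :: "complex ^ 'n ^ 'n"
  shows "is_eigenvalue M l \<longleftrightarrow> det (M - mat l) = 0"
proof -
  have mat_l: "mat l *v v = l *s v" for v :: "complex ^ 'n"
    by (simp add: vec_eq_iff matrix_vector_mult_def mat_def mult_delta_left)
  have "is_eigenvalue M l \<longleftrightarrow> (\<exists>v. v \<noteq> 0 \<and> (M - mat l) *v v = 0)"
    by (simp add: is_eigenvalue_def matrix_vector_mult_diff_rdistrib mat_l)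
  also have "\<dots> \<longleftrightarrow> \<not> invertible (M - mat l)"
    unfolding invertible_left_inverse matrix_left_invertible_ker by blast
  finally show ?thesis
    by (simp add: invertible_det_nz)
qed

lemma is_eigenvalue_transpose: "is_eigenvalue (transpose M) l \<longleftrightarrow> is_eigenvalue M l"
proof -
  have "transpose M - mat l = transpose (M - mat l)"
    by (simp add: vec_eq_iff transpose_def mat_def)
  then show ?thesis
    by (simp add: is_eigenvalue_iff_det)
qed

lemma is_eigenvalue_if_eigen_columns:
  assumes "M ** X = cscale l X" "X \<noteq> 0"
  shows "is_eigenvalue M l"
proof -
  obtain i j where "X $ i $ j \<noteq> 0"
    using \<open>X \<noteq> 0\<close> by (metis vec_eq_iff zero_index)
  then have "column j X \<noteq> 0"
    by (auto simp: vec_eq_iff column_def)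
  moreover have "M *v column j X = l *s column j X"
    using assms(1) by (auto simp: vec_eq_iff column_def matrix_vector_mult_def matrix_matrix_mult_def)
  ultimately show ?thesis
    unfolding is_eigenvalue_def by blast
qed

lemma is_eigenvalue_if_eigen_rows:
  assumes "X ** M = cscale l X" "X \<noteq> 0"
  shows "is_eigenvalue M l"
proof -
  have "transpose M ** transpose X = cscale l (transpose X)"
    using arg_cong[OF assms(1), of transpose] by (simp add: matrix_transpose_mul transpose_cscale)
  moreover have "transpose X \<noteq> 0"
    using assms(2) by (auto simp: vec_eq_iff transpose_def)
  ultimately show ?thesis
    using is_eigenvalue_if_eigen_columns is_eigenvalue_transpose by blast
qed

lemma eq_mat_if_eigen_columns_invertible:
  assumes "M ** X = cscale l X" "X ** Y = mat 1"
  shows "M = mat l"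
proof -
  have "M = (M ** X) ** Y"
    using assms(2) by (simp add: matrix_mul_assoc[symmetric])
  also have "\<dots> = cscale l (X ** Y)"
    using assms(1) by simp
  finally show ?thesis
    using assms(2) by simp
qed

definition has_matrix_derivative ::
    "(complex \<Rightarrow> complex ^ 'n ^ 'm) \<Rightarrow> complex ^ 'n ^ 'm \<Rightarrow> complex filter \<Rightarrow> bool"
    (infix "has'_matrix'_derivative" 50) where
  "(F has_matrix_derivative D) L \<longleftrightarrow> (\<forall>i j. ((\<lambda>z. F z $ i $ j) has_field_derivative D $ i $ j) L)"

lemma has_matrix_derivative_unique:
  "(F has_matrix_derivative D) (at z) \<Longrightarrow> (F has_matrix_derivative E) (at z) \<Longrightarrow> D = E"
  unfolding has_matrix_derivative_def by (simp add: vec_eq_iff) (metis DERIV_unique)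

lemma has_matrix_derivative_mult:
  assumes "(F has_matrix_derivative D) (at z within S)" "(G has_matrix_derivative E) (at z within S)"
  shows "((\<lambda>w. F w ** G w) has_matrix_derivative D ** G z + F z ** E) (at z within S)"
  using assms unfolding has_matrix_derivative_def matrix_matrix_mult_def
  by (auto simp: sum.distrib[symmetric] intro!: DERIV_sum DERIV_mult'[THEN DERIV_cong])

lemma has_matrix_derivative_inverse_solution:
  fixes V W :: "complex \<Rightarrow> complex ^ 'n ^ 'n"
  assumes "open S" "z \<in> S" and inverse: "\<And>w. w \<in> S \<Longrightarrow> V w ** W w = mat 1"
    and "(W has_matrix_derivative A ** W z) (at z)" "(V has_matrix_derivative DV) (at z)"
  shows "DV = - (V z ** A)"
proof -
  have "((\<lambda>w. V w ** W w) has_matrix_derivative DV ** W z + V z ** (A ** W z)) (at z)"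
    using assms by (intro has_matrix_derivative_mult)
  moreover have "((\<lambda>w. V w ** W w) has_matrix_derivative 0) (at z)"
    unfolding has_matrix_derivative_def
    by (auto intro!: has_field_derivative_transform_within_open[OF DERIV_const \<open>open S\<close> \<open>z \<in> S\<close>]
        simp: inverse)
  ultimately have "(DV + V z ** A) ** W z = 0"
    by (simp add: has_matrix_derivative_unique matrix_add_rdistrib matrix_mul_assoc)
  then have "(DV + V z ** A) ** (W z ** V z) = 0"
    by (simp add: matrix_mul_assoc)
  moreover have "W z ** V z = mat 1"
    using inverse[OF \<open>z \<in> S\<close>] matrix_left_right_inverse by blast
  ultimately show ?thesis
    by (simp add: eq_neg_iff_add_eq_0)
qed

lemma laurent_matrix_series_leading_terms:
  fixes F :: "complex \<Rightarrow> complex ^ 'n ^ 'm" and b :: "nat \<Rightarrow> complex ^ 'n ^ 'm" and q :: int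
  assumes "r > 0"
    and sums: "\<And>z. z \<in> ball 0 r - {0} \<Longrightarrow> (\<lambda>k. cscale (z powi (q + int k)) (b k)) sums F z"
  shows laurent_matrix_tendsto_leading: "((\<lambda>z. cscale (z powi (- q)) (F z)) \<longlongrightarrow> b 0) (at 0)"
    and laurent_matrix_differentiable:
      "\<And>z. z \<in> ball 0 r - {0} \<Longrightarrow> \<exists>D. (F has_matrix_derivative D) (at z)"
    and laurent_matrix_derivative_tendsto_leading:
      "(\<And>z. z \<in> ball 0 r - {0} \<Longrightarrow> (F has_matrix_derivative F' z) (at z)) \<Longrightarrow>
        ((\<lambda>z. cscale (z powi (1 - q)) (F' z)) \<longlongrightarrow> cscale (of_int q) (b 0)) (at 0)"
proof -
  have entry_sums: "\<And>z. z \<in> ball 0 r - {0} \<Longrightarrow>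
      (\<lambda>k. z powi (q + int k) * b k $ i $ j) sums F z $ i $ j" for i j
    using sums_vec_nth[OF sums_vec_nth[OF sums]] by simp
  show "((\<lambda>z. cscale (z powi (- q)) (F z)) \<longlongrightarrow> b 0) (at 0)"
  proof (intro vec_tendstoI)
    fix i j
    show "((\<lambda>z. cscale (z powi (- q)) (F z) $ i $ j) \<longlongrightarrow> b 0 $ i $ j) (at 0)"
      by (simp, intro laurent_series_tendsto_leading[OF \<open>r > 0\<close>] entry_sums)
  qed
  show "\<exists>D. (F has_matrix_derivative D) (at z)" if "z \<in> ball 0 r - {0}" for z
    using laurent_series_differentiable[OF \<open>r > 0\<close> entry_sums that] unfolding has_matrix_derivative_def
    by (auto intro!: exI[of _ "\<chi> i j. deriv (\<lambda>w. F w $ i $ j) z"]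
        DERIV_deriv_iff_field_differentiable[THEN iffD2])
  assume F': "\<And>z. z \<in> ball 0 r - {0} \<Longrightarrow> (F has_matrix_derivative F' z) (at z)"
  note ev = eventually_punctured_ball_at_0[OF \<open>r > 0\<close>]
  show "((\<lambda>z. cscale (z powi (1 - q)) (F' z)) \<longlongrightarrow> cscale (of_int q) (b 0)) (at 0)"
  proof (intro vec_tendstoI)
    fix i j
    have "\<forall>\<^sub>F z in at 0.
        z powi (1 - q) * deriv (\<lambda>w. F w $ i $ j) z = cscale (z powi (1 - q)) (F' z) $ i $ j"
      using ev by eventually_elim (use F' in \<open>auto simp: has_matrix_derivative_def DERIV_imp_deriv\<close>)
    from Lim_transform_eventually[OF laurent_series_deriv_tendsto_leading[OF \<open>r > 0\<close> entry_sums] this]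
    show "((\<lambda>z. cscale (z powi (1 - q)) (F' z) $ i $ j) \<longlongrightarrow> cscale (of_int q) (b 0) $ i $ j) (at 0)"
      by simp
  qed
qed

lemma laurent_solution_indicial:
  fixes F H :: "complex \<Rightarrow> complex ^ 'n ^ 'n" and q :: int
  assumes "r > 0"
    and sums: "\<And>z. z \<in> ball 0 r - {0} \<Longrightarrow> (\<lambda>k. cscale (z powi (q + int k)) (b k)) sums F z"
    and ode: "\<And>z. z \<in> ball 0 r - {0} \<Longrightarrow>
      (F has_matrix_derivative (cscale (1 / z) M + H z) ** F z) (at z)"
    and H: "(H \<longlongrightarrow> H0) (at 0)"
  shows "M ** b 0 = cscale (of_int q) (b 0)"
proof -
  have "((\<lambda>z. (M + cscale z (H z)) ** cscale (z powi (- q)) (F z)) \<longlongrightarrow> (M + cscale 0 H0) ** b 0) (at 0)"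
    by (intro tendsto_intros laurent_matrix_tendsto_leading[OF \<open>r > 0\<close> sums] H)
  moreover have "\<forall>\<^sub>F z in at 0. (M + cscale z (H z)) ** cscale (z powi (- q)) (F z)
      = cscale (z powi (1 - q)) ((cscale (1 / z) M + H z) ** F z)"
    using eventually_punctured_ball_at_0[OF \<open>r > 0\<close>]
  proof eventually_elim
    case (elim z)
    then have nz: "z \<noteq> 0"
      by simp
    have "cscale (z powi (1 - q)) (cscale (1 / z) M + H z) ** F z
        = cscale (z powi (- q)) (M + cscale z (H z)) ** F z"
      by (simp only: cscale_powi_simple_pole[OF nz])
    then show ?case
      by simp
  qed
  ultimately have "((\<lambda>z. cscale (z powi (1 - q)) ((cscale (1 / z) M + H z) ** F z))
      \<longlongrightarrow> (M + cscale 0 H0) ** b 0) (at 0)"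
    by (rule Lim_transform_eventually)
  moreover have "((\<lambda>z. cscale (z powi (1 - q)) ((cscale (1 / z) M + H z) ** F z))
      \<longlongrightarrow> cscale (of_int q) (b 0)) (at 0)"
    by (rule laurent_matrix_derivative_tendsto_leading[OF \<open>r > 0\<close> sums ode])
  ultimately have "(M + cscale 0 H0) ** b 0 = cscale (of_int q) (b 0)"
    by (rule LIM_unique)
  then show ?thesis
    by simp
qed

lemma laurent_adjoint_solution_indicial:
  fixes F H :: "complex \<Rightarrow> complex ^ 'n ^ 'n" and q :: int
  assumes "r > 0"
    and sums: "\<And>z. z \<in> ball 0 r - {0} \<Longrightarrow> (\<lambda>k. cscale (z powi (q + int k)) (b k)) sums F z"
    and ode: "\<And>z. z \<in> ball 0 r - {0} \<Longrightarrow>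
      (F has_matrix_derivative - (F z ** (cscale (1 / z) M + H z))) (at z)"
    and H: "(H \<longlongrightarrow> H0) (at 0)"
  shows "b 0 ** M = cscale (of_int (- q)) (b 0)"
proof -
  have "((\<lambda>z. - (cscale (z powi (- q)) (F z) ** (M + cscale z (H z))))
      \<longlongrightarrow> - (b 0 ** (M + cscale 0 H0))) (at 0)"
    by (intro tendsto_intros laurent_matrix_tendsto_leading[OF \<open>r > 0\<close> sums] H)
  moreover have "\<forall>\<^sub>F z in at 0. - (cscale (z powi (- q)) (F z) ** (M + cscale z (H z)))
      = cscale (z powi (1 - q)) (- (F z ** (cscale (1 / z) M + H z)))"
    using eventually_punctured_ball_at_0[OF \<open>r > 0\<close>]
  proof eventually_elim
    case (elim z)
    then have nz: "z \<noteq> 0"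
      by simp
    have "- (F z ** cscale (z powi (1 - q)) (cscale (1 / z) M + H z))
        = - (F z ** cscale (z powi (- q)) (M + cscale z (H z)))"
      by (simp only: cscale_powi_simple_pole[OF nz])
    then show ?case
      by simp
  qed
  ultimately have "((\<lambda>z. cscale (z powi (1 - q)) (- (F z ** (cscale (1 / z) M + H z))))
      \<longlongrightarrow> - (b 0 ** (M + cscale 0 H0))) (at 0)"
    by (rule Lim_transform_eventually)
  moreover have "((\<lambda>z. cscale (z powi (1 - q)) (- (F z ** (cscale (1 / z) M + H z))))
      \<longlongrightarrow> cscale (of_int q) (b 0)) (at 0)"
    by (rule laurent_matrix_derivative_tendsto_leading[OF \<open>r > 0\<close> sums ode])
  ultimately have "- (b 0 ** (M + cscale 0 H0)) = cscale (of_int q) (b 0)"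
    by (rule LIM_unique)
  then have "b 0 ** M = - cscale (of_int q) (b 0)"
    by (simp add: minus_equation_iff[of "b 0 ** M"])
  then show ?thesis
    by (simp add: cscale_minus_left)
qed

lemma laurent_matrix_inverse_leading:
  fixes F :: "complex \<Rightarrow> complex ^ 'n ^ 'm" and G :: "complex \<Rightarrow> complex ^ 'm ^ 'n" and q q' :: int
  assumes "r > 0"
    and F: "\<And>z. z \<in> ball 0 r - {0} \<Longrightarrow> (\<lambda>k. cscale (z powi (q + int k)) (b k)) sums F z"
    and G: "\<And>z. z \<in> ball 0 r - {0} \<Longrightarrow> (\<lambda>k. cscale (z powi (q' + int k)) (c k)) sums G z"
    and "q + q' = 0" and inverse: "\<And>z. z \<in> ball 0 r - {0} \<Longrightarrow> F z ** G z = mat 1"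
  shows "b 0 ** c 0 = mat 1"
proof -
  have "((\<lambda>z. cscale (z powi (- q)) (F z) ** cscale (z powi (- q')) (G z)) \<longlongrightarrow> b 0 ** c 0) (at 0)"
    by (intro tendsto_intros laurent_matrix_tendsto_leading[OF \<open>r > 0\<close>] F G)
  moreover have "\<forall>\<^sub>F z in at 0. mat 1 = cscale (z powi (- q)) (F z) ** cscale (z powi (- q')) (G z)"
    using eventually_punctured_ball_at_0[OF \<open>r > 0\<close>]
  proof eventually_elim
    case (elim z)
    moreover have "q' = - q"
      using \<open>q + q' = 0\<close> by simp
    ultimately have "z powi (- q') * z powi (- q) = 1"
      by (simp add: power_int_add[symmetric])
    then show ?case
      using inverse[OF elim] by simp
  qed
  then have "((\<lambda>z. cscale (z powi (- q)) (F z) ** cscale (z powi (- q')) (G z)) \<longlongrightarrow> mat 1) (at 0)"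
    by (rule Lim_transform_eventually[OF tendsto_const])
  ultimately show ?thesis
    by (rule LIM_unique)
qed

lemma laurent_solution_leading_eigenvalues:
  fixes W V H :: "complex \<Rightarrow> complex ^ 'n ^ 'n" and M :: "complex ^ 'n ^ 'n" and m p :: int
  assumes "r > 0"
    and W_sums: "\<And>z. z \<in> ball 0 r - {0} \<Longrightarrow> (\<lambda>k. cscale (z powi (m + int k)) (b k)) sums W z"
    and V_sums: "\<And>z. z \<in> ball 0 r - {0} \<Longrightarrow> (\<lambda>k. cscale (z powi (p + int k)) (c k)) sums V z"
    and W_ode: "\<And>z. z \<in> ball 0 r - {0} \<Longrightarrow>
      (W has_matrix_derivative (cscale (1 / z) M + H z) ** W z) (at z)"
    and H: "(H \<longlongrightarrow> H0) (at 0)"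
    and inverse: "\<And>z. z \<in> ball 0 r - {0} \<Longrightarrow> V z ** W z = mat 1"
    and "b 0 \<noteq> 0" "c 0 \<noteq> 0"
  shows "is_eigenvalue M (of_int m) \<and> is_eigenvalue M (of_int (- p)) \<and>
         (is_scalar_matrix M \<or>
          (\<exists>k1 k2 :: int. k1 \<noteq> k2 \<and> is_eigenvalue M (of_int k1) \<and> is_eigenvalue M (of_int k2)))"
proof -
  have V_ode: "(V has_matrix_derivative - (V z ** (cscale (1 / z) M + H z))) (at z)"
    if z: "z \<in> ball 0 r - {0}" for z
  proof -
    obtain V' where V': "(V has_matrix_derivative V') (at z)"
      using laurent_matrix_differentiable[OF \<open>r > 0\<close> V_sums z] by blast
    have "open (ball 0 r - {0 :: complex})"
      by (simp add: open_delete)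
    with V' show ?thesis
      using has_matrix_derivative_inverse_solution[OF _ z inverse W_ode[OF z] V'] by simp
  qed
  have b_eigen: "M ** b 0 = cscale (of_int m) (b 0)"
    by (rule laurent_solution_indicial[OF \<open>r > 0\<close> W_sums W_ode H])
  have c_eigen: "c 0 ** M = cscale (of_int (- p)) (c 0)"
    by (rule laurent_adjoint_solution_indicial[OF \<open>r > 0\<close> V_sums V_ode H])
  have "is_scalar_matrix M" if "m + p = 0"
  proof -
    have "b 0 ** c 0 = mat 1"
      using laurent_matrix_inverse_leading[OF \<open>r > 0\<close> W_sums V_sums that] inverse
        matrix_left_right_inverse by blast
    then show ?thesis
      using eq_mat_if_eigen_columns_invertible[OF b_eigen] unfolding is_scalar_matrix_def by blast
  qed
  moreover have "is_eigenvalue M (of_int m)" "is_eigenvalue M (of_int (- p))"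
    using is_eigenvalue_if_eigen_columns[OF b_eigen \<open>b 0 \<noteq> 0\<close>]
      is_eigenvalue_if_eigen_rows[OF c_eigen \<open>c 0 \<noteq> 0\<close>] .
  moreover have "m \<noteq> - p \<longleftrightarrow> m + p \<noteq> 0"
    by auto
  ultimately show ?thesis
    by blast
qed

theorem proposition2p5:
  fixes A W :: "complex \<Rightarrow> complex ^ 'n ^ 'n"
    and x0 :: complex and \<rho>0 :: real
    and am1 :: "complex ^ 'n ^ 'n"
    and a b c :: "nat \<Rightarrow> complex ^ 'n ^ 'n"
    and m p :: int
  assumes rho_pos: "\<rho>0 > 0"
    and A_laurent: "\<And>x. 0 < cmod (x - x0) \<Longrightarrow> cmod (x - x0) < \<rho>0 \<Longrightarrow>
          (\<lambda>k. cscale ((x - x0) ^ k) (a k)) sums (A x - cscale (1 / (x - x0)) am1)"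
    and W_series: "\<And>x. 0 < cmod (x - x0) \<Longrightarrow> cmod (x - x0) < \<rho>0 \<Longrightarrow>
          (\<lambda>k. cscale ((x - x0) powi (m + int k)) (b k)) sums W x"
    and b_lead: "b 0 \<noteq> 0"
    and W_ode: "\<And>x i j. 0 < cmod (x - x0) \<Longrightarrow> cmod (x - x0) < \<rho>0 \<Longrightarrow>
          ((\<lambda>y. W y $ i $ j) has_field_derivative (A x ** W x) $ i $ j) (at x)"
    and W_inv: "\<And>x. 0 < cmod (x - x0) \<Longrightarrow> cmod (x - x0) < \<rho>0 \<Longrightarrow> invertible (W x)"
    and Winv_series: "\<And>x. 0 < cmod (x - x0) \<Longrightarrow> cmod (x - x0) < \<rho>0 \<Longrightarrow>
          (\<lambda>k. cscale ((x - x0) powi (p + int k)) (c k)) sums matrix_inv (W x)"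
    and c_lead: "c 0 \<noteq> 0"
  shows "is_eigenvalue am1 (of_int m) \<and> is_eigenvalue am1 (of_int (- p)) \<and>
         (is_scalar_matrix am1 \<or>
          (\<exists>k1 k2 :: int. k1 \<noteq> k2 \<and> is_eigenvalue am1 (of_int k1) \<and> is_eigenvalue am1 (of_int k2)))"
proof -
  define W0 where "W0 z = W (z + x0)" for z
  define V0 where "V0 z = matrix_inv (W (z + x0))" for z
  define H where "H z = A (z + x0) - cscale (1 / z) am1" for z
  have shift: "0 < cmod (z + x0 - x0) \<and> cmod (z + x0 - x0) < \<rho>0" if "z \<in> ball 0 \<rho>0 - {0}" for z
    using that by auto
  have W0_sums: "\<And>z. z \<in> ball 0 \<rho>0 - {0} \<Longrightarrow> (\<lambda>k. cscale (z powi (m + int k)) (b k)) sums W0 z"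
    using W_series shift by (fastforce simp: W0_def)
  have V0_sums: "\<And>z. z \<in> ball 0 \<rho>0 - {0} \<Longrightarrow> (\<lambda>k. cscale (z powi (p + int k)) (c k)) sums V0 z"
    using Winv_series shift by (fastforce simp: V0_def)
  have W0_ode: "(W0 has_matrix_derivative (cscale (1 / z) am1 + H z) ** W0 z) (at z)"
    if "z \<in> ball 0 \<rho>0 - {0}" for z
    using W_ode[of "z + x0"] shift[OF that]
    by (simp add: has_matrix_derivative_def W0_def H_def DERIV_shift)
  have "\<And>z. z \<in> ball 0 \<rho>0 - {0} \<Longrightarrow> (\<lambda>k. cscale (z powi (0 + int k)) (a k)) sums H z"
    using A_laurent shift by (fastforce simp: H_def)
  then have H_tendsto: "(H \<longlongrightarrow> a 0) (at 0)"
    using laurent_matrix_tendsto_leading[OF rho_pos] by fastforce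
  have inverse: "\<And>z. z \<in> ball 0 \<rho>0 - {0} \<Longrightarrow> V0 z ** W0 z = mat 1"
    using W_inv shift by (fastforce simp: W0_def V0_def matrix_inv_left)
  show ?thesis
    by (rule laurent_solution_leading_eigenvalues
        [OF rho_pos W0_sums V0_sums W0_ode H_tendsto inverse b_lead c_lead])
qed

end
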